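(* Let $\Gamma$ be a Deza graph with parameters $(n,k,k-1,a)$, $k>1$, $\beta=1$. For an $NA$-vertex $x$, $x''=x$ (where $x''=(x')'$, which is defined since $x'$ is an $NA$-vertex).
   Context: A Deza graph with parameters $(n,k,b,a)$, $a\le b$, is a $k$-regular graph on $n$ vertices in which any two distinct vertices have $a$ or $b$ common neighbours; $\beta$ is the number of vertices $u\ne v$ with exactly $b$ common neighbours with a given vertex $v$. Since $\beta=1$, for each vertex $x$ let $x_b$ denote the unique vertex having $b=k-1$ common neighbours with $x$. A vertex $x$ is an $A$-vertex if $x$ is adjacent to $x_b$, and an $NA$-vertex otherwise. For an $NA$-vertex $x$, $x'$ denotes the unique neighbour of $x$ not adjacent to $x_b$; for an $NA$-vertex $x$ the vertex $x'$ is again an $NA$-vertex. *)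

theory Defs
  imports Main
begin

definition common :: "'a set \<Rightarrow> ('a \<Rightarrow> 'a \<Rightarrow> bool) \<Rightarrow> 'a \<Rightarrow> 'a \<Rightarrow> nat" where
  "common V E x y = card {z \<in> V. E x z \<and> E y z}"

definition deza_graph :: "'a set \<Rightarrow> ('a \<Rightarrow> 'a \<Rightarrow> bool) \<Rightarrow> nat \<Rightarrow> nat \<Rightarrow> nat \<Rightarrow> nat \<Rightarrow> bool" where
  "deza_graph V E n k b a \<longleftrightarrow>
     finite V \<and> card V = n \<and>
     (\<forall>x y. E x y \<longrightarrow> x \<in> V \<and> y \<in> V) \<and>
     (\<forall>x y. E x y \<longrightarrow> E y x) \<and>
     (\<forall>x. \<not> E x x) \<and>
     (\<forall>x\<in>V. card {y \<in> V. E x y} = k) \<and>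
     a \<le> b \<and>
     (\<forall>x\<in>V. \<forall>y\<in>V. x \<noteq> y \<longrightarrow> common V E x y = a \<or> common V E x y = b)"

definition beta :: "'a set \<Rightarrow> ('a \<Rightarrow> 'a \<Rightarrow> bool) \<Rightarrow> nat \<Rightarrow> 'a \<Rightarrow> nat" where
  "beta V E b v = card {u \<in> V. u \<noteq> v \<and> common V E u v = b}"

definition xb :: "'a set \<Rightarrow> ('a \<Rightarrow> 'a \<Rightarrow> bool) \<Rightarrow> nat \<Rightarrow> 'a \<Rightarrow> 'a" where
  "xb V E b x = (THE u. u \<in> V \<and> u \<noteq> x \<and> common V E x u = b)"

definition A_vertex :: "'a set \<Rightarrow> ('a \<Rightarrow> 'a \<Rightarrow> bool) \<Rightarrow> nat \<Rightarrow> 'a \<Rightarrow> bool" where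
  "A_vertex V E b x \<longleftrightarrow> x \<in> V \<and> E x (xb V E b x)"

definition NA_vertex :: "'a set \<Rightarrow> ('a \<Rightarrow> 'a \<Rightarrow> bool) \<Rightarrow> nat \<Rightarrow> 'a \<Rightarrow> bool" where
  "NA_vertex V E b x \<longleftrightarrow> x \<in> V \<and> \<not> E x (xb V E b x)"

definition xprime :: "'a set \<Rightarrow> ('a \<Rightarrow> 'a \<Rightarrow> bool) \<Rightarrow> nat \<Rightarrow> 'a \<Rightarrow> 'a" where
  "xprime V E b x = (THE y. y \<in> V \<and> E x y \<and> \<not> E y (xb V E b x))"

end

theory Submission
  imports Defs
begin

text \<open>Let \<open>y = x\<^sub>b\<close>. Since \<open>common x y = k - 1\<close> in a \<open>k\<close>-regular graph, \<open>N x = C \<union> {x'}\<close> and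
  \<open>N y = C \<union> {y'}\<close> with \<open>C = N x \<inter> N y\<close>, where \<open>y'\<close> is the vertex \<open>x'\<close> built from \<open>y\<close> (as \<open>y\<^sub>b = x\<close>).
  Every other vertex \<open>w\<close> has \<open>a\<close> common neighbours with both \<open>x\<close> and \<open>y\<close>, so \<open>w\<close> is adjacent to
  \<open>x'\<close> iff it is adjacent to \<open>y'\<close>. As \<open>y\<close> is not adjacent to \<open>x'\<close>, this gives
  \<open>N x' - N y' = {x}\<close>: hence \<open>x'\<close> and \<open>y'\<close> have \<open>k - 1\<close> common neighbours, so \<open>x'\<^sub>b = y'\<close>,
  and \<open>x\<close> is the unique neighbour of \<open>x'\<close> not adjacent to \<open>y'\<close>.\<close>

definition nbhd :: "'a set \<Rightarrow> ('a \<Rightarrow> 'a \<Rightarrow> bool) \<Rightarrow> 'a \<Rightarrow> 'a set" where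
  "nbhd V E v = {z \<in> V. E v z}"

lemma common_eq_card_nbhd: "common V E u v = card (nbhd V E u \<inter> nbhd V E v)"
  unfolding common_def nbhd_def by (rule arg_cong[where f = card]) auto

lemma card_Int_insert_eq_iff:
  assumes "finite A" "p \<notin> C" "q \<notin> C"
  shows "card (A \<inter> insert p C) = card (A \<inter> insert q C) \<longleftrightarrow> (p \<in> A \<longleftrightarrow> q \<in> A)"
proof -
  have "card (A \<inter> insert r C) = card (A \<inter> C) + (if r \<in> A then 1 else 0)" if "r \<notin> C" for r
    using that assms(1) by (simp add: Int_insert_right)
  then show ?thesis using assms(2,3) by auto
qed

locale deza_beta_one =
  fixes V :: "'a set" and E :: "'a \<Rightarrow> 'a \<Rightarrow> bool" and n k b a :: nat
  assumes deza: "deza_graph V E n k b a"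
    and beta_one: "\<forall>v\<in>V. beta V E b v = 1"
begin

abbreviation N :: "'a \<Rightarrow> 'a set" where "N \<equiv> nbhd V E"

abbreviation partner :: "'a \<Rightarrow> 'a" where "partner \<equiv> xb V E b"

lemma finite_V: "finite V"
  using deza by (simp add: deza_graph_def)

lemma edge_in_V: "E u v \<Longrightarrow> u \<in> V \<and> v \<in> V"
  using deza by (simp add: deza_graph_def)

lemma E_commute: "E u v \<longleftrightarrow> E v u"
  using deza by (auto simp: deza_graph_def)

lemma card_nbhd: "v \<in> V \<Longrightarrow> card (N v) = k"
  using deza by (simp add: deza_graph_def nbhd_def)

lemma finite_nbhd: "finite (N v)"
  using finite_V by (simp add: nbhd_def)

lemma mem_nbhd_iff: "w \<in> N v \<longleftrightarrow> E v w"
  using edge_in_V by (auto simp: nbhd_def)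

lemma common_commute: "common V E u v = common V E v u"
  by (simp add: common_eq_card_nbhd Int_commute)

lemma common_cases: "u \<in> V \<Longrightarrow> v \<in> V \<Longrightarrow> u \<noteq> v \<Longrightarrow> common V E u v = a \<or> common V E u v = b"
  using deza by (simp add: deza_graph_def)

lemma partner_ex1: "v \<in> V \<Longrightarrow> \<exists>!u. u \<in> V \<and> u \<noteq> v \<and> common V E v u = b"
proof -
  assume "v \<in> V"
  then have "card {u \<in> V. u \<noteq> v \<and> common V E u v = b} = 1"
    using beta_one by (simp add: beta_def)
  then obtain t where "{u \<in> V. u \<noteq> v \<and> common V E u v = b} = {t}"
    by (auto simp: card_1_singleton_iff)
  then show ?thesis
    by (auto simp: common_commute[of v] set_eq_iff)
qed

lemma partner: "v \<in> V \<Longrightarrow> partner v \<in> V \<and> partner v \<noteq> v \<and> common V E v (partner v) = b"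
  unfolding xb_def by (rule theI') (rule partner_ex1)

lemma partner_eqI: "v \<in> V \<Longrightarrow> u \<in> V \<Longrightarrow> u \<noteq> v \<Longrightarrow> common V E v u = b \<Longrightarrow> partner v = u"
  unfolding xb_def by (rule the1_equality[OF partner_ex1]) auto

lemma partner_partner: "v \<in> V \<Longrightarrow> partner (partner v) = v"
  using partner partner_eqI common_commute by metis

lemma common_non_partner:
  "v \<in> V \<Longrightarrow> w \<in> V \<Longrightarrow> w \<noteq> v \<Longrightarrow> w \<noteq> partner v \<Longrightarrow> common V E v w = a"
  using common_cases partner_eqI by metis

end

locale deza_beta_one_k_minus_1 = deza_beta_one V E n k "k - 1" a for V E n k a +
  assumes k_pos: "0 < k"
begin

abbreviation xp :: "'a \<Rightarrow> 'a" where "xp \<equiv> xprime V E (k - 1)"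

lemma nbhd_diff_partner: "v \<in> V \<Longrightarrow> N v - N (partner v) = {xp v}"
proof -
  assume v: "v \<in> V"
  have "card (N v - N (partner v)) = card (N v) - card (N v \<inter> N (partner v))"
    using finite_nbhd by (simp add: card_Diff_subset_Int)
  also have "\<dots> = 1"
    using v k_pos partner card_nbhd by (simp flip: common_eq_card_nbhd)
  finally obtain w where w: "N v - N (partner v) = {w}"
    by (auto simp: card_1_singleton_iff)
  have "xp v = w"
    unfolding xprime_def
  proof (rule the_equality)
    show "w \<in> V \<and> E v w \<and> \<not> E w (partner v)"
      using w by (auto simp: nbhd_def E_commute)
  next
    show "u = w" if "u \<in> V \<and> E v u \<and> \<not> E u (partner v)" for u
      using that w by (auto simp: nbhd_def E_commute)
  qed
  with w show ?thesis by simp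
qed

lemma adjacent_xprime_iff:
  assumes x: "x \<in> V" and w: "w \<in> V" "w \<noteq> x" "w \<noteq> partner x"
  shows "E w (xp x) \<longleftrightarrow> E w (xp (partner x))"
proof -
  define y where "y = partner x"
  define C where "C = N x \<inter> N y"
  have y: "y \<in> V" "partner y = x"
    using partner[OF x] partner_partner[OF x] by (simp_all add: y_def)
  have "N x - N y = {xp x}"
    unfolding y_def using x by (rule nbhd_diff_partner)
  moreover have "N y - N x = {xp y}"
    using nbhd_diff_partner[OF y(1)] unfolding y(2) .
  ultimately have Nx: "N x = insert (xp x) C" and x'C: "xp x \<notin> C"
    and Ny: "N y = insert (xp y) C" and y'C: "xp y \<notin> C"
    unfolding C_def by blast+
  have "common V E x w = a"
    using common_non_partner[OF x w] .
  moreover have "common V E y w = a"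
    using common_non_partner[OF y(1) w(1)] w y by (auto simp: y_def)
  ultimately have "card (N w \<inter> N x) = card (N w \<inter> N y)"
    by (metis common_commute common_eq_card_nbhd)
  then have "card (N w \<inter> insert (xp x) C) = card (N w \<inter> insert (xp y) C)"
    by (simp only: Nx Ny)
  then have "xp x \<in> N w \<longleftrightarrow> xp y \<in> N w"
    using card_Int_insert_eq_iff[OF finite_nbhd x'C y'C] by blast
  then show ?thesis
    by (simp add: mem_nbhd_iff y_def)
qed

lemma xprime: "x \<in> V \<Longrightarrow> xp x \<in> V \<and> E x (xp x) \<and> \<not> E (partner x) (xp x)"
proof -
  assume "x \<in> V"
  then have "xp x \<in> N x - N (partner x)"
    using nbhd_diff_partner by blast
  then show ?thesis
    by (auto simp: nbhd_def)
qed

lemma nbhd_xprime_diff: "x \<in> V \<Longrightarrow> N (xp x) - N (xp (partner x)) = {x}"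
proof -
  assume x: "x \<in> V"
  define y where "y = partner x"
  have y: "y \<in> V" "partner y = x"
    using partner[OF x] partner_partner[OF x] by (simp_all add: y_def)
  have xx': "E x (xp x)" and yx': "\<not> E y (xp x)"
    using xprime[OF x] by (simp_all add: y_def)
  have xy': "\<not> E x (xp y)"
    using xprime[OF y(1)] y(2) by simp
  have "w = x" if "E (xp x) w" "\<not> E (xp y) w" for w
  proof (rule ccontr)
    assume "w \<noteq> x"
    moreover have "w \<noteq> y" "w \<in> V"
      using that(1) yx' edge_in_V E_commute by auto
    ultimately show False
      using that adjacent_xprime_iff[OF x] E_commute by (auto simp: y_def)
  qed
  with xx' xy' show ?thesis
    by (auto simp: mem_nbhd_iff E_commute y_def)
qed

lemma partner_xprime: "x \<in> V \<Longrightarrow> partner (xp x) = xp (partner x)"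
proof -
  assume x: "x \<in> V"
  have x'y': "N (xp x) - N (xp (partner x)) = {x}"
    using nbhd_xprime_diff[OF x] .
  have V: "xp x \<in> V" "xp (partner x) \<in> V"
    using x partner xprime by blast+
  have "card (N (xp x)) = common V E (xp x) (xp (partner x)) + 1"
    using card_Int_Diff[OF finite_nbhd, of "xp x" "N (xp (partner x))"] x'y'
    by (simp add: common_eq_card_nbhd)
  then have "common V E (xp x) (xp (partner x)) = k - 1"
    using V card_nbhd by simp
  moreover have "xp (partner x) \<noteq> xp x"
    using x'y' by auto
  ultimately show ?thesis
    using V by (metis partner_eqI)
qed

lemma xprime_xprime: "x \<in> V \<Longrightarrow> xp (xp x) = x"
proof -
  assume x: "x \<in> V"
  then have "{xp (xp x)} = N (xp x) - N (partner (xp x))"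
    using xprime nbhd_diff_partner by simp
  also have "\<dots> = {x}"
    using x partner_xprime nbhd_xprime_diff by simp
  finally show ?thesis
    by simp
qed

end

theorem lemma11:
  fixes V :: "'a set" and E :: "'a \<Rightarrow> 'a \<Rightarrow> bool" and n k a :: nat and x :: 'a
  assumes "deza_graph V E n k (k - 1) a"
    and "k > 1"
    and "\<forall>v\<in>V. beta V E (k - 1) v = 1"
    and "NA_vertex V E (k - 1) x"
  shows "xprime V E (k - 1) (xprime V E (k - 1) x) = x"
proof -
  interpret deza_beta_one_k_minus_1 V E n k a
    using assms(1-3) by unfold_locales auto
  have "x \<in> V"
    using assms(4) by (simp add: NA_vertex_def)
  then show ?thesis
    by (rule xprime_xprime)
qed

end
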